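(* Let $h$ and $k$ be relatively prime integers with $k>0$ and $h+k$ odd. Then $$B_{1}(h,k)=\frac{1-h}{2k}\sum_{j=1}^{k}\tan\left(\frac{\pi h(2j-1)}{2k}\right)\cot\left(\frac{\pi(2j-1)}{2k}\right).$$
   Context: $[x]$ denotes the greatest integer $\le x$. For integers $h,k$ with $k>0$ and $\gcd(h,k)=1$, $$B_{1}(h,k)=\sum_{j=1}^{k-1}(-1)^{j+\left[\frac{hj}{k}\right]}\left[\frac{hj}{k}\right].$$ *)

theory Defs
  imports Complex_Main
begin

text \<open>B_1(h,k); the sign (-1)^e for integer e is written (-1)^nat|e|.\<close>
definition B1 :: "int \<Rightarrow> int \<Rightarrow> int" where
  "B1 h k = (\<Sum>j\<in>{1..k-1}. (-1) ^ nat \<bar>j + \<lfloor>real_of_int (h*j) / real_of_int k\<rfloor>\<bar>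
                 * \<lfloor>real_of_int (h*j) / real_of_int k\<rfloor>)"

end

theory Submission
  imports Defs
begin

text \<open>
  Writing \<open>f j = \<lfloor>h j / k\<rfloor>\<close>, the reflection \<open>j \<mapsto> k - j\<close> sends \<open>f j\<close> to \<open>h - 1 - f j\<close>
  and, because \<open>h + k\<close> is odd, preserves the sign \<open>(-1)^(j + f j)\<close>; hence
  \<open>2 B\<^sub>1(h,k) = (h - 1) \<Sum> (-1)^(j + f j)\<close>.
  At the points \<open>x = \<pi>(2i+1)/(2k)\<close> both \<open>e^(2ix)\<close> and \<open>-e^(2ihx)\<close> are \<open>k\<close>-th roots
  of \<open>-1\<close>, so \<open>tan(hx) cot x\<close> is the product of two truncated geometric series in them.
  Summing over \<open>i\<close>, orthogonality of \<open>i \<mapsto> e^(i\<pi>(2i+1)N/k)\<close> keeps, for each \<open>m\<close>, only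
  the unique \<open>n\<close> with \<open>k | hm + n\<close>, and the tangent-cotangent sum collapses to
  \<open>-k \<Sum> (-1)^(m + f m)\<close>.
\<close>

definition neg_one_pow :: "int \<Rightarrow> int" where
  "neg_one_pow n = (if even n then 1 else -1)"

lemma neg_one_pow_add: "neg_one_pow (a + b) = neg_one_pow a * neg_one_pow b"
  by (auto simp: neg_one_pow_def)

lemma power_minus_one_nat_abs: "(-1::int) ^ nat \<bar>n\<bar> = neg_one_pow n"
  by (simp add: neg_one_pow_def even_nat_iff)

lemma cis_pi_times_int: "cis (pi * of_int n) = of_int (neg_one_pow n)"
  by (simp add: complex_eq_iff neg_one_pow_def)

lemma cis_double_add_one: "cis (2 * y) + 1 = 2 * of_real (cos y) * cis y"
  by (simp add: complex_eq_iff cos_double sin_double power2_eq_square)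
     (smt (verit) sin_cos_squared_add3)

lemma cis_double_diff_one: "cis (2 * y) - 1 = 2 * \<i> * of_real (sin y) * cis y"
  by (simp add: complex_eq_iff cos_double sin_double power2_eq_square)
     (smt (verit) sin_cos_squared_add3)

lemma cis_double_tan:
  assumes "cos y \<noteq> 0"
  shows "(1 - cis (2 * y)) / (1 + cis (2 * y)) = - \<i> * of_real (tan y)"
proof -
  have "(1 - cis (2 * y)) / (1 + cis (2 * y)) = - (cis (2 * y) - 1) / (cis (2 * y) + 1)"
    by (simp add: add.commute)
  also have "\<dots> = - (2 * \<i> * of_real (sin y) * cis y) / (2 * of_real (cos y) * cis y)"
    by (simp only: cis_double_add_one cis_double_diff_one)
  also have "\<dots> = - \<i> * of_real (tan y)"
    using assms by (simp add: tan_def)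
  finally show ?thesis .
qed

lemma cis_double_cot:
  assumes "sin x \<noteq> 0"
  shows "(cis (2 * x) + 1) / (1 - cis (2 * x)) = \<i> * of_real (cot x)"
proof -
  have "(cis (2 * x) + 1) / (1 - cis (2 * x)) = - ((cis (2 * x) + 1) / (cis (2 * x) - 1))"
    by (simp add: divide_minus_right[symmetric] del: divide_minus_right)
  also have "\<dots> = - ((2 * of_real (cos x) * cis x) / (2 * \<i> * of_real (sin x) * cis x))"
    by (simp only: cis_double_add_one cis_double_diff_one)
  also have "\<dots> = \<i> * of_real (cot x)"
    using assms by (simp add: cot_def field_simps)
  finally show ?thesis .
qed

lemma sum_power_atLeast_1_root_of_minus_one:
  fixes x :: "'a :: field"
  assumes "x \<noteq> 1" "x ^ K = -1" "K > 0"
  shows "(\<Sum>n\<in>{1..<K}. x ^ n) = (x + 1) / (1 - x)"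
proof -
  have nz: "1 - x \<noteq> 0" "x - 1 \<noteq> 0"
    using assms(1) by simp_all
  have "(\<Sum>n\<in>{1..<K}. x ^ n) = (\<Sum>n<K. x ^ n) - 1"
    using assms(3) by (simp add: lessThan_atLeast0 sum.atLeast_Suc_lessThan)
  also have "(\<Sum>n<K. x ^ n) = 2 / (1 - x)"
    using assms(1,2) nz by (simp add: geometric_sum field_simps)
  also have "2 / (1 - x) - 1 = (x + 1) / (1 - x)"
    using nz by (simp add: field_simps)
  finally show ?thesis .
qed

lemma tan_mul_cot_eq_geometric_product:
  fixes x y :: real and K :: nat
  assumes "K > 0" "cos y \<noteq> 0" "sin x \<noteq> 0"
    and "(- cis (2 * y)) ^ K = -1" "cis (2 * x) ^ K = -1"
  shows "complex_of_real (tan y * cot x) =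
           (\<Sum>m\<in>{1..<K}. (- cis (2 * y)) ^ m) * (\<Sum>n\<in>{1..<K}. cis (2 * x) ^ n)"
proof -
  have "cis (2 * y) + 1 \<noteq> 0" "cis (2 * x) - 1 \<noteq> 0"
    using assms(2,3) by (simp_all add: cis_double_add_one cis_double_diff_one)
  then have "- cis (2 * y) \<noteq> 1" "cis (2 * x) \<noteq> 1"
    by (auto simp: add_eq_0_iff)
  then have "(\<Sum>m\<in>{1..<K}. (- cis (2 * y)) ^ m) = - \<i> * of_real (tan y)"
    and "(\<Sum>n\<in>{1..<K}. cis (2 * x) ^ n) = \<i> * of_real (cot x)"
    using sum_power_atLeast_1_root_of_minus_one[of "- cis (2 * y)" K]
      sum_power_atLeast_1_root_of_minus_one[of "cis (2 * x)" K]
      assms cis_double_tan[of y] cis_double_cot[of x]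
    by (simp_all add: diff_minus_eq_add)
  then show ?thesis
    by (simp add: algebra_simps)
qed

lemma sum_cis_odd_multiples:
  fixes K :: nat and N :: int
  assumes K: "K > 0"
  shows "(\<Sum>i<K. cis (pi * real (2 * i + 1) * of_int N / real K)) =
           (if int K dvd N then of_nat K * of_int (neg_one_pow (N div int K)) else 0)"
proof (cases "int K dvd N")
  case True
  then obtain t where t: "N = int K * t"
    by blast
  have "cis (pi * real (2 * i + 1) * of_int N / real K) = of_int (neg_one_pow t)" for i
  proof -
    have "pi * real (2 * i + 1) * of_int N / real K = pi * of_int ((2 * int i + 1) * t)"
      using K by (simp add: t field_simps)
    then show ?thesis
      by (simp only: cis_pi_times_int) (simp add: neg_one_pow_def)
  qed
  then show ?thesis
    using True t K by simp
next
  case False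
  define q where "q = cis (2 * pi * of_int N / real K)"
  have terms: "cis (pi * real (2 * i + 1) * of_int N / real K) = cis (pi * of_int N / real K) * q ^ i"
    for i
    unfolding q_def DeMoivre cis_mult
    by (rule arg_cong[where f = cis]) (simp add: field_simps add_divide_distrib)
  have "q \<noteq> 1"
  proof
    assume "q = 1"
    then have "cos (2 * pi * of_int N / real K) = 1"
      unfolding q_def by (simp add: complex_eq_iff)
    then obtain n :: int where "2 * pi * of_int N / real K = of_int n * 2 * pi"
      by (auto simp: cos_one_2pi_int)
    then have "of_int N = real_of_int (n * int K)"
      using K by (simp add: field_simps)
    then show False
      using False by (simp only: of_int_eq_iff) simp
  qed
  moreover have "q ^ K = 1"
    using K by (simp add: q_def DeMoivre)
  ultimately have "cis (pi * of_int N / real K) * (\<Sum>i<K. q ^ i) = 0"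
    by (simp add: geometric_sum)
  then show ?thesis
    using False by (simp only: terms sum_distrib_left if_False)
qed

lemma odd_point_conditions:
  fixes h :: int and K i :: nat
  assumes i: "i < K" and odd: "odd (h + int K)"
  defines "x \<equiv> pi * real (2 * i + 1) / (2 * real K)"
  shows "cos (of_int h * x) \<noteq> 0" "sin x \<noteq> 0"
    and "(- cis (2 * (of_int h * x))) ^ K = -1" "cis (2 * x) ^ K = -1"
proof -
  have K: "real K > 0"
    using i by simp
  have "0 < x" "x < pi"
    using i K by (simp_all add: x_def divide_less_eq)
  then show "sin x \<noteq> 0"
    using sin_gt_zero by fastforce
  show "cos (of_int h * x) \<noteq> 0"
  proof
    assume "cos (of_int h * x) = 0"
    then obtain n :: int where "of_int h * x = of_int n * pi + pi / 2"
      by (auto simp: cos_zero_iff_int2)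
    then have "pi * real_of_int (h * (2 * int i + 1)) = pi * real_of_int ((2 * n + 1) * int K)"
      using K by (simp add: x_def field_simps)
    then have "h * (2 * int i + 1) = (2 * n + 1) * int K"
      by (simp only: mult_left_cancel pi_neq_zero of_int_eq_iff simp_thms)
    then have "even (h * (2 * int i + 1)) = even ((2 * n + 1) * int K)"
      by simp
    then have "even h = even (int K)"
      by simp
    then show False
      using odd by simp
  qed
  have "(- cis (2 * (of_int h * x))) ^ K = (-1) ^ K * cis (real K * (2 * (of_int h * x)))"
    unfolding DeMoivre[symmetric] by (rule power_minus)
  also have "real K * (2 * (of_int h * x)) = pi * of_int (h * (2 * int i + 1))"
    using K by (simp add: x_def field_simps)
  also have "(-1) ^ K * cis (pi * of_int (h * (2 * int i + 1))) = -1"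
    unfolding cis_pi_times_int using odd by (simp add: neg_one_pow_def)
  finally show "(- cis (2 * (of_int h * x))) ^ K = -1" .
  have "real K * (2 * x) = pi * of_int (2 * int i + 1)"
    using K by (simp add: x_def field_simps)
  then have "cis (2 * x) ^ K = cis (pi * of_int (2 * int i + 1))"
    by (simp only: DeMoivre)
  then show "cis (2 * x) ^ K = -1"
    unfolding cis_pi_times_int by (simp add: neg_one_pow_def)
qed

lemma sum_if_dvd_shift:
  fixes a :: int and K :: nat and g :: "int \<Rightarrow> 'a :: comm_monoid_add"
  assumes K: "K > 0" and nd: "\<not> int K dvd a"
  shows "(\<Sum>n\<in>{1..<K}. if int K dvd (a + int n) then g ((a + int n) div int K) else 0)
           = g (a div int K + 1)"
proof -
  define q r where "q = a div int K" and "r = a mod int K"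
  have a: "a = int K * q + r"
    by (simp add: q_def r_def)
  have r: "0 < r" "r < int K"
    using K nd by (simp_all add: r_def order_le_neq_trans dvd_eq_mod_eq_0)
  define n0 where "n0 = nat (int K - r)"
  have n0: "int n0 = int K - r" "n0 \<in> {1..<K}"
    using r by (auto simp: n0_def)
  have a_n0: "a + int n0 = int K * (q + 1)"
    using a n0 by (simp add: algebra_simps)
  have dvd_iff: "int K dvd (a + int n) \<longleftrightarrow> n = n0" if n: "n \<in> {1..<K}" for n
  proof
    assume "int K dvd (a + int n)"
    then obtain t where t: "r + int n = int K * t"
      unfolding a by (metis add.assoc dvd_add_right_iff dvd_def dvd_triv_left)
    have "1 \<le> int n" "int n < int K"
      using n by auto
    then have "0 < int K * t" "int K * t < int K * 2"
      using t r by linarith+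
    then have "t = 1"
      using K by (simp add: zero_less_mult_iff mult_less_cancel_left_pos)
    then show "n = n0"
      using t n0 by simp
  next
    assume "n = n0"
    then show "int K dvd (a + int n)"
      using a_n0 by simp
  qed
  have "(\<Sum>n\<in>{1..<K}. if int K dvd (a + int n) then g ((a + int n) div int K) else 0)
      = (\<Sum>n\<in>{1..<K}. if n = n0 then g (q + 1) else 0)"
    using a_n0 K by (intro sum.cong refl) (simp add: dvd_iff)
  then show ?thesis
    using n0 by (simp add: q_def)
qed

lemma not_dvd_mult_coprime:
  fixes h k j :: int
  assumes "coprime h k" "0 < j" "j < k"
  shows "\<not> k dvd h * j"
proof
  assume "k dvd h * j"
  then have "k dvd j"
    using assms(1) by (simp add: coprime_commute coprime_dvd_mult_right_iff)
  then show False
    using assms(2,3) zdvd_imp_le by fastforce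
qed

lemma tan_mul_cot_odd_point_expansion:
  fixes h :: int and K i :: nat
  assumes i: "i < K" and odd: "odd (h + int K)"
  defines "x \<equiv> pi * real (2 * i + 1) / (2 * real K)"
  shows "complex_of_real (tan (of_int h * x) * cot x) =
           (\<Sum>m\<in>{1..<K}. \<Sum>n\<in>{1..<K}. of_int (neg_one_pow (int m))
              * cis (pi * real (2 * i + 1) * of_int (h * int m + int n) / real K))"
proof -
  have K: "K > 0"
    using i by simp
  have "complex_of_real (tan (of_int h * x) * cot x) =
          (\<Sum>m\<in>{1..<K}. (- cis (2 * (of_int h * x))) ^ m) * (\<Sum>n\<in>{1..<K}. cis (2 * x) ^ n)"
    using tan_mul_cot_eq_geometric_product[OF K] odd_point_conditions[OF i odd]
    unfolding x_def by blast
  also have "\<dots> = (\<Sum>m\<in>{1..<K}. \<Sum>n\<in>{1..<K}. (- cis (2 * (of_int h * x))) ^ m * cis (2 * x) ^ n)"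
    by (rule sum_product)
  also have "\<dots> = (\<Sum>m\<in>{1..<K}. \<Sum>n\<in>{1..<K}. of_int (neg_one_pow (int m))
              * cis (pi * real (2 * i + 1) * of_int (h * int m + int n) / real K))"
  proof (intro sum.cong refl)
    fix m n :: nat
    have "real m * (2 * (of_int h * x)) + real n * (2 * x)
            = pi * real (2 * i + 1) * of_int (h * int m + int n) / real K"
      using K by (simp add: x_def field_simps)
    then have "cis (2 * (of_int h * x)) ^ m * cis (2 * x) ^ n
                 = cis (pi * real (2 * i + 1) * of_int (h * int m + int n) / real K)"
      by (simp only: DeMoivre cis_mult)
    moreover have "(-1) ^ m = (of_int (neg_one_pow (int m)) :: complex)"
      by (simp add: neg_one_pow_def)
    ultimately show "(- cis (2 * (of_int h * x))) ^ m * cis (2 * x) ^ n = of_int (neg_one_pow (int m))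
              * cis (pi * real (2 * i + 1) * of_int (h * int m + int n) / real K)"
      by (simp only: power_minus[of "cis _"] mult.assoc)
  qed
  finally show ?thesis .
qed

lemma sum_tan_mul_cot_odd_points:
  fixes h :: int and K :: nat
  assumes K: "K > 0" and cop: "coprime h (int K)" and odd: "odd (h + int K)"
  shows "(\<Sum>i<K. tan (of_int h * (pi * real (2 * i + 1) / (2 * real K)))
                  * cot (pi * real (2 * i + 1) / (2 * real K)))
           = - real K * of_int (\<Sum>m\<in>{1..<K}. neg_one_pow (int m + h * int m div int K))"
proof -
  define c where "c i m n = of_int (neg_one_pow (int m))
    * cis (pi * real (2 * i + 1) * of_int (h * int m + int n) / real K)" for i m n :: nat
  have "complex_of_real (\<Sum>i<K. tan (of_int h * (pi * real (2 * i + 1) / (2 * real K)))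
                  * cot (pi * real (2 * i + 1) / (2 * real K)))
      = (\<Sum>i<K. \<Sum>m\<in>{1..<K}. \<Sum>n\<in>{1..<K}. c i m n)"
    unfolding of_real_sum c_def using odd
    by (intro sum.cong refl tan_mul_cot_odd_point_expansion) auto
  also have "\<dots> = (\<Sum>m\<in>{1..<K}. \<Sum>n\<in>{1..<K}. \<Sum>i<K. c i m n)"
    by (subst sum.swap) (simp only: sum.swap[of _ "{..<K}"])
  also have "\<dots> = (\<Sum>m\<in>{1..<K}. of_int (neg_one_pow (int m)) * (\<Sum>n\<in>{1..<K}.
        if int K dvd (h * int m + int n)
        then of_nat K * of_int (neg_one_pow ((h * int m + int n) div int K)) else 0))"
    by (simp only: c_def sum_distrib_left[symmetric] sum_cis_odd_multiples[OF K])
  also have "\<dots> = (\<Sum>m\<in>{1..<K}. of_int (neg_one_pow (int m))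
                     * (of_nat K * of_int (neg_one_pow (h * int m div int K + 1))))"
    using not_dvd_mult_coprime[OF cop]
    by (intro sum.cong refl arg_cong[where f = "(*) _"] sum_if_dvd_shift[OF K]) auto
  also have "\<dots> = (\<Sum>m\<in>{1..<K}. - of_nat K * of_int (neg_one_pow (int m + h * int m div int K)))"
    by (intro sum.cong refl) (auto simp: neg_one_pow_def)
  also have "\<dots> = of_real (- real K * of_int (\<Sum>m\<in>{1..<K}. neg_one_pow (int m + h * int m div int K)))"
    by (simp add: sum_distrib_left)
  finally show ?thesis
    by (simp only: of_real_eq_iff)
qed

lemma sum_tan_mul_cot_odd_multiples:
  fixes h k :: int
  assumes cop: "coprime h k" and k: "k > 0" and odd: "odd (h + k)"
  shows "(\<Sum>j\<in>{1..k}. tan (pi * of_int h * of_int (2 * j - 1) / (2 * of_int k))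
                 * cot (pi * of_int (2 * j - 1) / (2 * of_int k)))
           = - of_int k * of_int (\<Sum>j\<in>{1..k - 1}. neg_one_pow (j + h * j div k))"
proof -
  obtain K where kK: "k = int K" and K: "K > 0"
    using k by (metis pos_int_cases of_nat_0_less_iff)
  have "(\<Sum>j\<in>{1..k}. tan (pi * of_int h * of_int (2 * j - 1) / (2 * of_int k))
                 * cot (pi * of_int (2 * j - 1) / (2 * of_int k)))
      = (\<Sum>i<K. tan (of_int h * (pi * real (2 * i + 1) / (2 * real K)))
                  * cot (pi * real (2 * i + 1) / (2 * real K)))"
    by (rule sum.reindex_bij_witness[of _ "\<lambda>i. int i + 1" "\<lambda>j. nat (j - 1)"])
      (auto simp: kK ac_simps)
  also have "\<dots> = - real K * of_int (\<Sum>m\<in>{1..<K}. neg_one_pow (int m + h * int m div int K))"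
    using sum_tan_mul_cot_odd_points[OF K] cop odd kK by simp
  also have "(\<Sum>m\<in>{1..<K}. neg_one_pow (int m + h * int m div int K))
               = (\<Sum>j\<in>{1..k - 1}. neg_one_pow (j + h * j div k))"
    by (rule sum.reindex_bij_witness[of _ nat int]) (auto simp: kK)
  finally show ?thesis
    by (simp add: kK)
qed

lemma div_reflect:
  fixes h k j :: int
  assumes k: "k > 0" and nd: "\<not> k dvd h * j"
  shows "h * (k - j) div k = h - 1 - h * j div k"
proof -
  have "h * (k - j) = - (h * j) + k * h"
    by (simp add: algebra_simps)
  then have "h * (k - j) div k = h + - (h * j) div k"
    using k by (simp only: div_mult_self2 less_irrefl)
  also have "- (h * j) div k = - (h * j div k) - 1"
    using k nd by (simp add: zdiv_zminus1_eq_if dvd_eq_mod_eq_0)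
  finally show ?thesis
    by simp
qed

lemma B1_reflection:
  fixes h k :: int
  assumes cop: "coprime h k" and k: "k > 0" and odd: "odd (h + k)"
  shows "2 * B1 h k = (h - 1) * (\<Sum>j\<in>{1..k - 1}. neg_one_pow (j + h * j div k))"
proof -
  define f where "f j = h * j div k" for j
  define s where "s j = neg_one_pow (j + f j)" for j
  have reflect: "f (k - j) = h - 1 - f j" "s (k - j) = s j" if j: "j \<in> {1..k - 1}" for j
  proof -
    show f: "f (k - j) = h - 1 - f j"
      unfolding f_def using j k not_dvd_mult_coprime[OF cop, of j] by (simp add: div_reflect)
    have "(k - j) + f (k - j) = (j + f j) + (h + k - 1 - 2 * j - 2 * f j)"
      unfolding f by simp
    moreover have "neg_one_pow (h + k - 1 - 2 * j - 2 * f j) = 1"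
      using odd by (simp add: neg_one_pow_def)
    ultimately show "s (k - j) = s j"
      unfolding s_def by (simp only: neg_one_pow_add mult_1_right)
  qed
  have B1: "B1 h k = (\<Sum>j\<in>{1..k - 1}. s j * f j)"
    unfolding B1_def floor_divide_of_int_eq power_minus_one_nat_abs s_def f_def ..
  also have "\<dots> = (\<Sum>j\<in>{1..k - 1}. s (k - j) * f (k - j))"
    by (rule sum.reindex_bij_witness[of _ "\<lambda>j. k - j" "\<lambda>j. k - j"]) auto
  also have "\<dots> = (\<Sum>j\<in>{1..k - 1}. (h - 1) * s j - s j * f j)"
  proof (intro sum.cong refl)
    fix j
    assume "j \<in> {1..k - 1}"
    then show "s (k - j) * f (k - j) = (h - 1) * s j - s j * f j"
      unfolding reflect[OF \<open>j \<in> {1..k - 1}\<close>] by (simp add: algebra_simps)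
  qed
  also have "\<dots> = (h - 1) * (\<Sum>j\<in>{1..k - 1}. s j) - B1 h k"
    unfolding B1 by (simp add: sum_subtractf sum_distrib_left)
  finally show ?thesis
    by (simp add: s_def f_def)
qed

theorem theorem23:
  fixes h k :: int
  assumes "coprime h k" and "k > 0" and "odd (h + k)"
  shows "real_of_int (B1 h k) =
    (1 - real_of_int h) / (2 * real_of_int k) *
    (\<Sum>j\<in>{1..k}. tan (pi * real_of_int h * real_of_int (2*j - 1) / (2 * real_of_int k))
                 * cot (pi * real_of_int (2*j - 1) / (2 * real_of_int k)))"
proof -
  define S where "S = (\<Sum>j\<in>{1..k - 1}. neg_one_pow (j + h * j div k))"
  have "2 * real_of_int (B1 h k) = (real_of_int h - 1) * of_int S"
    using arg_cong[OF B1_reflection[OF assms], of real_of_int] by (simp add: S_def)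
  moreover have "(1 - real_of_int h) / (2 * real_of_int k) * (- of_int k * of_int S)
                   = (real_of_int h - 1) * of_int S / 2"
    using assms(2) by (simp add: field_simps)
  ultimately show ?thesis
    unfolding sum_tan_mul_cot_odd_multiples[OF assms, folded S_def] by simp
qed

end
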